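(* Let $H$ be a finite-dimensional complex Hilbert space and let $\mathcal{B}(H)$ be the complex vector space of (bounded) linear operators $H\to H$. Then the map $$\mathrm{hs}_{\mathcal{B}}\colon \mathcal{B}(H)\longrightarrow \mathcal{B}(H)^{*}=\big(\overline{\mathcal{B}(H)}\multimap\mathbb{C}\big),\qquad \mathrm{hs}_{\mathcal{B}}(A)=\big(B\mapsto \mathrm{tr}(AB^{\dagger})\big)$$ coincides, for any choice of basis $|1\rangle,\dots,|n\rangle$ of $H$, with the basis-dependent duality isomorphism $\mathcal{B}(H)\cong\mathcal{B}(H)^*$ determined by the basis $\{|j\rangle\langle k|\}_{j,k}$ of $\mathcal{B}(H)$ (sending $\sum_{j,k}z_{jk}\,|j\rangle\langle k|$ to $\sum_{j,k} z_{jk}$ times the dual basis functional of $|j\rangle\langle k|$); in particular $\mathrm{hs}_{\mathcal{B}}$ is an isomorphism and it is independent of the choice of basis. Moreover these maps form a natural isomorphism $\mathcal{B}\circ(-)^{\dagger}\Rightarrow(-)^{*}\circ\mathcal{B}$ between functors $\mathbf{FdHilb}\to\mathbf{Vect}_{\mathbb{C}}^{\mathrm{op}}$; concretely, for every linear map $C\colon H\to K$ between finite-dimensional Hilbert spaces, $\mathcal{B}(C)^{*}\circ \mathrm{hs}_{\mathcal{B},K}=\mathrm{hs}_{\mathcal{B},H}\circ\mathcal{B}(C^{\dagger})$ as maps $\mathcal{B}(K)\to\mathcal{B}(H)^*$. Finally, the functors $\mathcal{B}\colon\mathbf{FdHilb}\to\mathbf{Vect}_{\mathbb{C}}$ and $\mathcal{B}\colon\mathbf{FdHilb}^{\mathrm{op}}\to\mathbf{Vect}_{\mathbb{C}}^{\mathrm{op}}$,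 together with the isomorphisms $\mathrm{hs}_{\mathcal{B}}$, form a map of adjunctions (in the sense of Mac Lane, Categories for the Working Mathematician, IV.7, with the functor squares commuting up to the natural isomorphisms $\mathrm{hs}_{\mathcal{B}}$) from the adjunction $(-)^{\dagger}\dashv(-)^{\dagger}$ between $\mathbf{FdHilb}$ and $\mathbf{FdHilb}^{\mathrm{op}}$ to the adjunction $(-)^{*}\dashv(-)^{*}$ between $\mathbf{Vect}_{\mathbb{C}}$ and $\mathbf{Vect}_{\mathbb{C}}^{\mathrm{op}}$.
   Context: $\mathbf{FdHilb}$ is the category of finite-dimensional complex Hilbert spaces with (bounded) linear maps; $C^{\dagger}$ denotes the adjoint (conjugate transpose) of $C$, and $(-)^{\dagger}\colon\mathbf{FdHilb}\to\mathbf{FdHilb}^{\mathrm{op}}$ is the identity on objects and $C\mapsto C^\dagger$ on maps; it is adjoint to itself (maps $V\to W$ correspond to maps $W\to V$ via $f\mapsto f^\dagger$). $\mathbf{Vect}_{\mathbb{C}}$ is the category of complex vector spaces and linear maps; $\overline{V}$ denotes the conjugate space of $V$ (same vectors, scalar multiplication $z\bullet_{\overline V}x=\overline{z}\bullet_V x$); $V\multimap W$ is the vector space of linear maps $V\to W$; $V^{*}=\overline{V}\multimap\mathbb{C}$, and on a linear map $C\colon V\to W$, $C^{*}\colon W^*\to V^*$ is $f\mapsto f\circ C$. The functor $(-)^*\colon\mathbf{Vect}_{\mathbb{C}}\to\mathbf{Vect}_{\mathbb{C}}^{\mathrm{op}}$ is adjoint to itself via the correspondence between linear maps $V\to\overline{W}\multimap\mathbb{C}$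 and $W\to\overline{V}\multimap\mathbb{C}$ (swapping arguments). The functor $\mathcal{B}\colon\mathbf{FdHilb}\to\mathbf{Vect}_{\mathbb{C}}$ sends $H$ to $\mathcal{B}(H)$ and $C\colon H\to K$ to $\mathcal{B}(C)(A)=CAC^{\dagger}$. $\mathrm{tr}$ denotes the trace. *)

theory Defs
  imports "HOL-Analysis.Analysis"
begin

text \<open>Finite-dimensional complex Hilbert spaces are modelled as \<open>complex ^ 'n\<close>
  (for a finite type \<open>'n\<close>) with the standard inner product; linear maps
  \<open>H \<rightarrow> K\<close> are matrices \<open>complex ^ 'n ^ 'm\<close>; \<open>\<B>(H)\<close> is \<open>complex ^ 'n ^ 'n\<close>.\<close>

definition cinner :: "complex ^ 'n \<Rightarrow> complex ^ 'n \<Rightarrow> complex" where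
  "cinner x y = (\<Sum>i\<in>UNIV. cnj (x $ i) * y $ i)"

definition adj :: "complex ^ 'n ^ 'm \<Rightarrow> complex ^ 'm ^ 'n" where
  "adj A = (\<chi> i j. cnj (A $ j $ i))"

definition mtrace :: "complex ^ 'n ^ 'n \<Rightarrow> complex" where
  "mtrace A = (\<Sum>i\<in>UNIV. A $ i $ i)"

definition mscale :: "complex \<Rightarrow> complex ^ 'n ^ 'm \<Rightarrow> complex ^ 'n ^ 'm" where
  "mscale c A = (\<chi> i j. c * A $ i $ j)"

definition ketbra :: "complex ^ 'n \<Rightarrow> complex ^ 'n \<Rightarrow> complex ^ 'n ^ 'n" where
  "ketbra u v = (\<chi> i j. u $ i * cnj (v $ j))"

definition orthonormal_basis :: "('n::finite \<Rightarrow> complex ^ 'n) \<Rightarrow> bool" where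
  "orthonormal_basis u \<longleftrightarrow> (\<forall>j k. cinner (u j) (u k) = (if j = k then 1 else 0))"

text \<open>Linear maps from the conjugate space to \<open>\<complex>\<close>, i.e. conjugate-linear functionals:
  the elements of \<open>V\<^sup>* = \<overline>V \<multimap> \<complex>\<close> for \<open>V = \<B>(H)\<close>.\<close>
definition conj_linear_fun :: "(complex ^ 'n ^ 'm \<Rightarrow> complex) \<Rightarrow> bool" where
  "conj_linear_fun f \<longleftrightarrow> (\<forall>A B. f (A + B) = f A + f B) \<and> (\<forall>c A. f (mscale c A) = cnj c * f A)"

definition lin_map :: "(complex ^ 'n ^ 'm \<Rightarrow> ('b \<Rightarrow> complex)) \<Rightarrow> bool" where
  "lin_map F \<longleftrightarrow> (\<forall>A B x. F (A + B) x = F A x + F B x) \<and> (\<forall>c A x. F (mscale c A) x = c * F A x)"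

definition Bmap :: "complex ^ 'n ^ 'm \<Rightarrow> complex ^ 'n ^ 'n \<Rightarrow> complex ^ 'm ^ 'm" where
  "Bmap C A = C ** A ** adj C"

definition hsB :: "complex ^ 'n ^ 'n \<Rightarrow> (complex ^ 'n ^ 'n \<Rightarrow> complex)" where
  "hsB A = (\<lambda>B. mtrace (A ** adj B))"

definition dual_map :: "('a \<Rightarrow> 'b) \<Rightarrow> ('b \<Rightarrow> complex) \<Rightarrow> ('a \<Rightarrow> complex)" where
  "dual_map F f = f \<circ> F"

text \<open>The adjunction bijection of \<open>(-)\<^sup>* \<turnstile> (-)\<^sup>*\<close>: a linear map \<open>V \<rightarrow> \<overline>W \<multimap> \<complex>\<close>
  corresponds to \<open>W \<rightarrow> \<overline>V \<multimap> \<complex>\<close> by swapping arguments; since the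
  values are regarded in the conjugate spaces, the swap carries a complex conjugation.\<close>
definition swap_dual :: "('v \<Rightarrow> 'w \<Rightarrow> complex) \<Rightarrow> ('w \<Rightarrow> 'v \<Rightarrow> complex)" where
  "swap_dual \<phi> = (\<lambda>w v. cnj (\<phi> v w))"

end

theory Submission
  imports Defs
begin

text \<open>With respect to the matrix units, \<open>hs\<^sub>\<B>\<close> is the standard sesquilinear form
  \<open>\<Sum>\<^sub>i\<^sub>j A\<^sub>i\<^sub>j cnj B\<^sub>i\<^sub>j\<close>; hence it identifies \<open>\<B>(H)\<close> with its conjugate-linear
  functionals, and the ket-bras of an orthonormal basis are again orthonormal for it.
  Naturality and the map-of-adjunctions property both reduce to the identity
  \<open>tr(C\<^sup>\<dagger> A C B\<^sup>\<dagger>) = tr(A (C B C\<^sup>\<dagger>)\<^sup>\<dagger>)\<close>, i.e. \<open>\<B>(C\<^sup>\<dagger>)\<close> is adjoint to \<open>\<B>(C)\<close>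
  for \<open>hs\<^sub>\<B>\<close>, combined with the conjugate symmetry of \<open>hs\<^sub>\<B>\<close>.\<close>

lemma hsB_entrywise: "hsB A B = (\<Sum>i\<in>UNIV. \<Sum>j\<in>UNIV. A $ i $ j * cnj (B $ i $ j))"
  unfolding hsB_def mtrace_def matrix_matrix_mult_def adj_def by simp

lemma cnj_hsB: "cnj (hsB A B) = hsB B A"
  by (simp add: hsB_entrywise mult.commute)

lemma hsB_add_left: "hsB (A + A') B = hsB A B + hsB A' B"
  by (simp add: hsB_entrywise distrib_right sum.distrib)

lemma hsB_add_right: "hsB A (B + B') = hsB A B + hsB A B'"
  by (simp add: hsB_entrywise distrib_left sum.distrib)

lemma hsB_mscale_left: "hsB (mscale c A) B = c * hsB A B"
  by (simp add: hsB_entrywise mscale_def sum_distrib_left mult.assoc)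

lemma hsB_mscale_right: "hsB A (mscale c B) = cnj c * hsB A B"
  by (simp add: hsB_entrywise mscale_def sum_distrib_left mult_ac)

lemma lin_map_hsB: "lin_map hsB"
  unfolding lin_map_def by (simp add: hsB_add_left hsB_mscale_left)

lemma conj_linear_fun_hsB: "conj_linear_fun (hsB A)"
  unfolding conj_linear_fun_def by (simp add: hsB_add_right hsB_mscale_right)

lemma conj_linear_fun_zero:
  assumes "conj_linear_fun f"
  shows "f 0 = 0"
  using assms unfolding conj_linear_fun_def by (metis add_0 add_cancel_right_right)

lemma conj_linear_fun_sum:
  assumes "conj_linear_fun f"
  shows "f (sum g S) = (\<Sum>x\<in>S. f (g x))"
proof (cases "finite S")
  case True
  then show ?thesis
    using assms conj_linear_fun_zero[OF assms]
    by (induction S rule: finite_induct) (simp_all add: conj_linear_fun_def)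
qed (simp add: conj_linear_fun_zero[OF assms])

lemma hsB_sum_right: "hsB A (sum F S) = (\<Sum>x\<in>S. hsB A (F x))"
  by (rule conj_linear_fun_sum[OF conj_linear_fun_hsB])

lemma hsB_sum_left: "hsB (sum F S) B = (\<Sum>x\<in>S. hsB (F x) B)"
proof -
  have "hsB (sum F S) B = cnj (hsB B (sum F S))"
    by (simp add: cnj_hsB)
  then show ?thesis
    by (simp add: hsB_sum_right cnj_hsB)
qed

lemma sum_sum_delta:
  fixes f :: "'a::finite \<Rightarrow> 'b::finite \<Rightarrow> 'c::comm_monoid_add"
  shows "(\<Sum>a\<in>UNIV. \<Sum>b\<in>UNIV. if i = a \<and> j = b then f a b else 0) = f i j"
proof -
  have "(\<Sum>a\<in>UNIV. \<Sum>b\<in>UNIV. if i = a \<and> j = b then f a b else 0)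
      = (\<Sum>a\<in>UNIV. if i = a then (\<Sum>b\<in>UNIV. if j = b then f a b else 0) else 0)"
    by (rule sum.cong) auto
  then show ?thesis by (simp add: sum.delta)
qed

lemma sum_sum_delta':
  fixes f :: "'a::finite \<Rightarrow> 'b::finite \<Rightarrow> 'c::comm_monoid_add"
  shows "(\<Sum>a\<in>UNIV. \<Sum>b\<in>UNIV. if a = i \<and> b = j then f a b else 0) = f i j"
  using sum_sum_delta[of i j f] by (simp add: eq_commute)

lemma hsB_ketbra: "hsB (ketbra a b) (ketbra c d) = cinner c a * cinner b d"
  unfolding hsB_entrywise ketbra_def cinner_def sum_product by (simp add: mult_ac)

lemma hsB_ketbra_orthonormal:
  assumes "orthonormal_basis u"
  shows "hsB (ketbra (u j) (u k)) (ketbra (u j') (u k')) = (if j = j' \<and> k = k' then 1 else 0)"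
  using assms by (simp add: hsB_ketbra orthonormal_basis_def)

lemma hsB_ketbra_expansion:
  assumes "orthonormal_basis u"
  shows "hsB (\<Sum>j\<in>UNIV. \<Sum>k\<in>UNIV. mscale (z j k) (ketbra (u j) (u k)))
             (\<Sum>j\<in>UNIV. \<Sum>k\<in>UNIV. mscale (w j k) (ketbra (u j) (u k)))
         = (\<Sum>j\<in>UNIV. \<Sum>k\<in>UNIV. z j k * cnj (w j k))"
  by (simp add: hsB_sum_left hsB_sum_right hsB_mscale_left hsB_mscale_right
      hsB_ketbra_orthonormal[OF assms] sum_distrib_left if_distrib[of "(*) _"] sum_sum_delta'
      mult.commute cong: if_cong)

definition matrix_unit :: "'n \<Rightarrow> 'n \<Rightarrow> complex ^ 'n ^ 'n" where
  "matrix_unit i j = (\<chi> a b. if i = a \<and> j = b then 1 else 0)"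

lemma hsB_matrix_unit: "hsB A (matrix_unit i j) = A $ i $ j"
  by (simp add: hsB_entrywise matrix_unit_def if_distrib[of cnj] if_distrib[of "(*) _"]
      sum_sum_delta cong: if_cong)

lemma matrix_unit_expansion: "B = (\<Sum>i\<in>UNIV. \<Sum>j\<in>UNIV. mscale (B $ i $ j) (matrix_unit i j))"
  by (simp add: vec_eq_iff mscale_def matrix_unit_def if_distrib[of "(*) _"] sum_sum_delta'
      cong: if_cong)

lemma inj_hsB: "inj hsB"
proof (rule injI)
  fix A A' :: "complex ^ 'n ^ 'n"
  assume "hsB A = hsB A'"
  then have "hsB A (matrix_unit i j) = hsB A' (matrix_unit i j)" for i j
    by simp
  then show "A = A'"
    by (simp add: hsB_matrix_unit vec_eq_iff)
qed

lemma conj_linear_fun_eq_hsB: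
  fixes f :: "complex ^ 'n ^ 'n \<Rightarrow> complex"
  assumes "conj_linear_fun f"
  shows "f = hsB (\<chi> i j. f (matrix_unit i j))"
proof
  fix B
  have "f B = f (\<Sum>i\<in>UNIV. \<Sum>j\<in>UNIV. mscale (B $ i $ j) (matrix_unit i j))"
    by (subst matrix_unit_expansion) (rule refl)
  also have "\<dots> = (\<Sum>i\<in>UNIV. \<Sum>j\<in>UNIV. cnj (B $ i $ j) * f (matrix_unit i j))"
    using assms by (simp add: conj_linear_fun_sum conj_linear_fun_def)
  also have "\<dots> = hsB (\<chi> i j. f (matrix_unit i j)) B"
    by (simp add: hsB_entrywise mult.commute)
  finally show "f B = hsB (\<chi> i j. f (matrix_unit i j)) B" .
qed

lemma bij_betw_hsB: "bij_betw hsB UNIV {f. conj_linear_fun f}"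
  unfolding bij_betw_def
  using inj_hsB conj_linear_fun_hsB conj_linear_fun_eq_hsB by fast

lemma adj_adj [simp]: "adj (adj A) = A"
  by (simp add: adj_def vec_eq_iff)

lemma adj_matrix_mult: "adj (A ** B) = adj B ** adj A"
  by (simp add: adj_def vec_eq_iff matrix_matrix_mult_def mult.commute)

lemma mtrace_matrix_mult_commute: "mtrace (A ** B) = mtrace (B ** A)"
  unfolding mtrace_def matrix_matrix_mult_def
  by (simp, subst sum.swap) (simp add: mult.commute)

lemma hsB_Bmap_adj: "hsB (Bmap (adj C) A) B = hsB A (Bmap C B)"
proof -
  have "hsB (Bmap (adj C) A) B = mtrace (adj C ** (A ** C ** adj B))"
    by (simp add: hsB_def Bmap_def matrix_mul_assoc)
  also have "\<dots> = mtrace ((A ** C ** adj B) ** adj C)"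
    by (rule mtrace_matrix_mult_commute)
  also have "\<dots> = hsB A (Bmap C B)"
    by (simp add: hsB_def Bmap_def adj_matrix_mult matrix_mul_assoc)
  finally show ?thesis .
qed

lemma dual_map_Bmap_comp_hsB: "dual_map (Bmap C) \<circ> hsB = hsB \<circ> Bmap (adj C)"
  by (simp add: fun_eq_iff dual_map_def hsB_Bmap_adj)

lemma hsB_comp_Bmap_adj: "hsB \<circ> Bmap (adj g) = swap_dual (hsB \<circ> Bmap g)"
  by (simp add: fun_eq_iff swap_dual_def cnj_hsB hsB_Bmap_adj)

theorem proposition2p1:
  fixes u :: "'n::finite \<Rightarrow> complex ^ 'n"
  assumes onb: "orthonormal_basis u"
  shows
    "(\<forall>(z :: 'n \<Rightarrow> 'n \<Rightarrow> complex) (w :: 'n \<Rightarrow> 'n \<Rightarrow> complex).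
        hsB (\<Sum>j\<in>UNIV. \<Sum>k\<in>UNIV. mscale (z j k) (ketbra (u j) (u k)))
            (\<Sum>j\<in>UNIV. \<Sum>k\<in>UNIV. mscale (w j k) (ketbra (u j) (u k)))
        = (\<Sum>j\<in>UNIV. \<Sum>k\<in>UNIV. z j k * cnj (w j k)))
   \<and> lin_map (hsB :: complex ^ 'n ^ 'n \<Rightarrow> _)
   \<and> (\<forall>A :: complex ^ 'n ^ 'n. conj_linear_fun (hsB A))
   \<and> bij_betw (hsB :: complex ^ 'n ^ 'n \<Rightarrow> _) UNIV {f. conj_linear_fun f}
   \<and> (\<forall>C :: complex ^ 'n ^ 'm.
        dual_map (Bmap C) \<circ> hsB = hsB \<circ> Bmap (adj C))
   \<and> (\<forall>g :: complex ^ 'n ^ 'm.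
        hsB \<circ> Bmap (adj g) = swap_dual (hsB \<circ> Bmap g))"
  using hsB_ketbra_expansion[OF onb] lin_map_hsB conj_linear_fun_hsB bij_betw_hsB
    dual_map_Bmap_comp_hsB hsB_comp_Bmap_adj
  by blast

end
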